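(* Let $\mathcal{F}$ be a hypothesis class of functions $\mathcal{X}\to\{\pm1\}$ with finite VC dimension $d$, and $\mathcal{P}$ an unknown distribution on $\mathcal{X}\times\{\pm1\}$. Consider a run of Active-ILESS with confidence $\delta$ and suppose the event $\mathcal{K}$ occurred. Then every true risk minimizer $f^*$ of the original distribution $\mathcal{P}$ belongs to $G_t$ for all $t$. Consequently $R_{\mathcal{P}(G_t)}(f^* )\le R(f^* )$ for all $t$.
   Context: $R(f)=R_{\mathcal{P}}(f)=\Pr_{\mathcal{P}}[f(X)\ne Y]$; $\hat R(f,S)$ is the fraction of examples of $S$ misclassified by $f$; $f^*$ is any minimizer of $R$ over $\mathcal{F}$. Slacks: for $n>0$, $\delta'\in(0,1)$, $A=4d\ln\frac{16ne}{d\delta'}$, $\hat\sigma_{R-\hat R}(n,\delta',d,\hat r)=\frac{A}{n}+\sqrt{\frac{A}{n}\hat r}$, $\bar\sigma_{R-\hat R}(n,\delta',d,r)=\sqrt{\frac{A}{n}r}$, $\bar\sigma_{\hat R-R}(n,\delta',d,r)=\frac{A}{n}+\sqrt{\frac{A}{n}r}$, $\hat\sigma_{\hat R-R}(n,\delta',d,\hat r)=\sqrt{\frac{A}{n}\hat r}$, $\sigma_{R-\hat R}=\min\{\hat\sigma_{R-\hat R}(\cdot,\hat r),\bar\sigma_{R-\hat R}(\cdot,r)\}$, $\sigma_{\hat R-R}=\min\{\bar\sigma_{\hat R-R}(\cdot,r),\hat\sigma_{\hat R-R}(\cdot,\hat r)\}$. $AGR(G)=\{x:\text{all }f\in G\text{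 agree on }x\}$. Active-ILESS (inputs: $\epsilon$ and/or budget $m$, confidence $\delta$, $\mathcal{F}$, $d$, i.i.d. stream $x_1,x_2,\dots$ from $\mathcal{P}$): initialize $\hat S=\emptyset$, $G_0=\mathcal{F}$, $t=1$; for each $x_t$: if $x_t\in AGR(G_{t-1})$ do not request its label and set $y_t=f(x_t)$ for any $f\in G_{t-1}$, otherwise request the true label $y_t$; add $(x_t,y_t)$ to $\hat S$; let $\hat f$ be an ERM on $\hat S$; if $\log_2t\in\mathbb{N}$: set $\sigma_{\rm Active}=\hat\sigma_{R-\hat R}(\tfrac t2,\tfrac\delta{2t},d,\hat R(\hat f,\hat S))+\bar\sigma_{\hat R-R}\big(\tfrac t2,\tfrac\delta{2t},d,\hat R(\hat f,\hat S)+\hat\sigma_{R-\hat R}(\tfrac t2,\tfrac\delta{2t},d,\hat R(\hat f,\hat S))\big)$, terminate returning $\hat f$ if $\epsilon$ was given and $\sigma_{\rm Active}<\epsilon$, set $G_t=\{f:\hat R(f,\hat S)\le\hat R(\hat f,\hat S)+\sigma_{\rm Active}\}$ and reset $\hat S=\emptyset$; otherwise $G_t=G_{t-1}$; if $m$ was given and $t=m$ terminate returning $\hat f$; increment $t$. For $G\subseteq\mathcal{F}$, $\mathcal{P}(G)$ is the distribution of $(X,Y')$ with $(X,Y)\sim\mathcal{P}$, $Y'$ = common value of $G$ at $X$ if $X\in AGR(G)$ and $Y'=Y$ otherwise; $R_{\mathcal{P}(G)}(f)=\Pr[f(X)\ne Y']$. Event $\mathcal{K}$: for every $t=2^i$ reached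 and every $f\in\mathcal{F}$, with $\hat R(f)=\hat R(f,\hat S)$ for $\hat S$ at iteration $t$ before reset, $R_{\mathcal{P}(G_{t-1})}(f)\le\hat R(f)+\sigma_{R-\hat R}(\tfrac t2,\tfrac\delta{2t},d,R_{\mathcal{P}(G_{t-1})}(f),\hat R(f))$ and $\hat R(f)\le R_{\mathcal{P}(G_{t-1})}(f)+\sigma_{\hat R-R}(\tfrac t2,\tfrac\delta{2t},d,R_{\mathcal{P}(G_{t-1})}(f),\hat R(f))$. *)

theory Defs
  imports "HOL-Probability.Probability"
begin

text \<open>Labels \<open>+1/-1\<close> are represented by \<open>True/False\<close>; hypotheses are maps \<open>'x \<Rightarrow> bool\<close>.\<close>

definition shatters :: "('x \<Rightarrow> bool) set \<Rightarrow> 'x set \<Rightarrow> bool" where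
  "shatters F A \<longleftrightarrow> (\<forall>B\<subseteq>A. \<exists>f\<in>F. \<forall>x\<in>A. f x = (x \<in> B))"

definition has_vc_dim :: "('x \<Rightarrow> bool) set \<Rightarrow> nat \<Rightarrow> bool" where
  "has_vc_dim F d \<longleftrightarrow>
     (\<exists>A. finite A \<and> card A = d \<and> shatters F A) \<and>
     (\<forall>A. finite A \<and> shatters F A \<longrightarrow> card A \<le> d)"

definition slackA :: "real \<Rightarrow> real \<Rightarrow> nat \<Rightarrow> real" where
  "slackA n \<delta>' d = 4 * real d * ln (16 * n * exp 1 / (real d * \<delta>'))"

definition hat_sigma_R_Rhat :: "real \<Rightarrow> real \<Rightarrow> nat \<Rightarrow> real \<Rightarrow> real" where
  "hat_sigma_R_Rhat n \<delta>' d rh = slackA n \<delta>' d / n + sqrt (slackA n \<delta>' d / n * rh)"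

definition bar_sigma_R_Rhat :: "real \<Rightarrow> real \<Rightarrow> nat \<Rightarrow> real \<Rightarrow> real" where
  "bar_sigma_R_Rhat n \<delta>' d r = sqrt (slackA n \<delta>' d / n * r)"

definition bar_sigma_Rhat_R :: "real \<Rightarrow> real \<Rightarrow> nat \<Rightarrow> real \<Rightarrow> real" where
  "bar_sigma_Rhat_R n \<delta>' d r = slackA n \<delta>' d / n + sqrt (slackA n \<delta>' d / n * r)"

definition hat_sigma_Rhat_R :: "real \<Rightarrow> real \<Rightarrow> nat \<Rightarrow> real \<Rightarrow> real" where
  "hat_sigma_Rhat_R n \<delta>' d rh = sqrt (slackA n \<delta>' d / n * rh)"

definition sigma_R_Rhat :: "real \<Rightarrow> real \<Rightarrow> nat \<Rightarrow> real \<Rightarrow> real \<Rightarrow> real" where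
  "sigma_R_Rhat n \<delta>' d r rh = min (hat_sigma_R_Rhat n \<delta>' d rh) (bar_sigma_R_Rhat n \<delta>' d r)"

definition sigma_Rhat_R :: "real \<Rightarrow> real \<Rightarrow> nat \<Rightarrow> real \<Rightarrow> real \<Rightarrow> real" where
  "sigma_Rhat_R n \<delta>' d r rh = min (bar_sigma_Rhat_R n \<delta>' d r) (hat_sigma_Rhat_R n \<delta>' d rh)"

definition sigma_active :: "nat \<Rightarrow> real \<Rightarrow> nat \<Rightarrow> real \<Rightarrow> real" where
  "sigma_active t \<delta> d rh =
     hat_sigma_R_Rhat (real t / 2) (\<delta> / (2 * real t)) d rh +
     bar_sigma_Rhat_R (real t / 2) (\<delta> / (2 * real t)) d
        (rh + hat_sigma_R_Rhat (real t / 2) (\<delta> / (2 * real t)) d rh)"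

definition emp_risk :: "('x \<Rightarrow> bool) \<Rightarrow> ('x \<times> bool) list \<Rightarrow> real" where
  "emp_risk f S = real (length (filter (\<lambda>(x, y). f x \<noteq> y) S)) / real (length S)"

definition risk :: "('x \<times> bool) measure \<Rightarrow> ('x \<Rightarrow> bool) \<Rightarrow> real" where
  "risk P f = measure P {z \<in> space P. f (fst z) \<noteq> snd z}"

definition AGR :: "('x \<Rightarrow> bool) set \<Rightarrow> 'x set" where
  "AGR G = {x. \<forall>f\<in>G. \<forall>g\<in>G. f x = g x}"

text \<open>The label \<open>Y'\<close> of \<open>\<P>(G)\<close>: the common value of \<open>G\<close> on \<open>AGR(G)\<close>, the true label otherwise.\<close>
definition relab :: "('x \<Rightarrow> bool) set \<Rightarrow> 'x \<Rightarrow> bool \<Rightarrow> bool" where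
  "relab G x y = (if G \<noteq> {} \<and> x \<in> AGR G then (SOME f. f \<in> G) x else y)"

definition riskG :: "('x \<times> bool) measure \<Rightarrow> ('x \<Rightarrow> bool) set \<Rightarrow> ('x \<Rightarrow> bool) \<Rightarrow> real" where
  "riskG P G f = measure P {z \<in> space P. f (fst z) \<noteq> relab G (fst z) (snd z)}"

definition is_pow2 :: "nat \<Rightarrow> bool" where
  "is_pow2 t \<longleftrightarrow> (\<exists>i. t = 2 ^ i)"

text \<open>
  \<open>active_iless_run F d \<delta> z T G S fh\<close>: iterations \<open>1..T\<close> of Active-ILESS were executed on the
  stream \<open>z t = (x_t, true label of x_t)\<close>.  \<open>G t\<close> is \<open>G_t\<close>, \<open>S t\<close> the sample \<open>\<hat>S\<close> at iteration
  \<open>t\<close> after adding the new example (before a possible reset), \<open>fh t\<close> the ERM chosen at iteration \<open>t\<close>.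
\<close>
definition active_iless_run ::
  "('x \<Rightarrow> bool) set \<Rightarrow> nat \<Rightarrow> real \<Rightarrow> (nat \<Rightarrow> 'x \<times> bool) \<Rightarrow> nat \<Rightarrow>
   (nat \<Rightarrow> ('x \<Rightarrow> bool) set) \<Rightarrow> (nat \<Rightarrow> ('x \<times> bool) list) \<Rightarrow> (nat \<Rightarrow> ('x \<Rightarrow> bool)) \<Rightarrow> bool" where
  "active_iless_run F d \<delta> z T G S fh \<longleftrightarrow>
     G 0 = F \<and> S 0 = [] \<and>
     (\<forall>t. 1 \<le> t \<and> t \<le> T \<longrightarrow>
        S t = (if is_pow2 (t - 1) then [] else S (t - 1)) @
              [(fst (z t), relab (G (t - 1)) (fst (z t)) (snd (z t)))] \<and>
        fh t \<in> F \<and> (\<forall>f\<in>F. emp_risk (fh t) (S t) \<le> emp_risk f (S t)) \<and>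
        G t = (if is_pow2 t
               then {f \<in> F. emp_risk f (S t) \<le> emp_risk (fh t) (S t) +
                               sigma_active t \<delta> d (emp_risk (fh t) (S t))}
               else G (t - 1)))"

text \<open>The event \<open>\<K>\<close> for the run (restricted to the iterations \<open>t = 2^i \<le> T\<close> that were reached).\<close>
definition event_K ::
  "('x \<times> bool) measure \<Rightarrow> ('x \<Rightarrow> bool) set \<Rightarrow> nat \<Rightarrow> real \<Rightarrow> nat \<Rightarrow>
   (nat \<Rightarrow> ('x \<Rightarrow> bool) set) \<Rightarrow> (nat \<Rightarrow> ('x \<times> bool) list) \<Rightarrow> bool" where
  "event_K P F d \<delta> T G S \<longleftrightarrow>
     (\<forall>t. 1 \<le> t \<and> t \<le> T \<and> is_pow2 t \<longrightarrow>
        (\<forall>f\<in>F.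
           riskG P (G (t - 1)) f \<le> emp_risk f (S t) +
             sigma_R_Rhat (real t / 2) (\<delta> / (2 * real t)) d (riskG P (G (t - 1)) f) (emp_risk f (S t)) \<and>
           emp_risk f (S t) \<le> riskG P (G (t - 1)) f +
             sigma_Rhat_R (real t / 2) (\<delta> / (2 * real t)) d (riskG P (G (t - 1)) f) (emp_risk f (S t))))"

end

theory Submission
  imports Defs
begin

text \<open>
  Relabelling by \<open>G\<close> only changes labels on \<open>AGR(G)\<close>, and there every member of \<open>G\<close> predicts the
  new label.  Hence for \<open>f\<^sup>* \<in> G\<close> the risk under \<open>\<P>(G)\<close> is at most the true risk, and the excess
  risk of any \<open>f\<close> over \<open>f\<^sup>*\<close> can only grow, so \<open>f\<^sup>*\<close> stays a risk minimizer for \<open>\<P>(G)\<close>.  On \<open>\<K>\<close>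
  the empirical risk of \<open>f\<^sup>*\<close> is then bounded by that of the ERM plus exactly the slack
  \<open>\<sigma>_Active\<close>, so \<open>f\<^sup>*\<close> survives every pruning step, by induction on \<open>t\<close>.
\<close>

lemma relab_eq_if_mem_AGR:
  assumes "f \<in> H" "x \<in> AGR H"
  shows "relab H x y = f x"
proof -
  have "(SOME f. f \<in> H) \<in> H" using assms(1) by (metis someI)
  then show ?thesis using assms unfolding relab_def AGR_def by auto
qed

lemma riskG_le_risk:
  assumes "prob_space P" "f \<in> H"
    and "{z \<in> space P. f (fst z) \<noteq> snd z} \<in> sets P"
  shows "riskG P H f \<le> risk P f"
proof -
  interpret prob_space P by fact
  have "{z \<in> space P. f (fst z) \<noteq> relab H (fst z) (snd z)} \<subseteq> {z \<in> space P. f (fst z) \<noteq> snd z}"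
  proof (intro subsetI)
    fix w assume w: "w \<in> {z \<in> space P. f (fst z) \<noteq> relab H (fst z) (snd z)}"
    show "w \<in> {z \<in> space P. f (fst z) \<noteq> snd z}"
    proof (cases "fst w \<in> AGR H")
      case True
      then show ?thesis using w relab_eq_if_mem_AGR[OF \<open>f \<in> H\<close> True] by simp
    next
      case False
      then show ?thesis using w by (simp add: relab_def)
    qed
  qed
  then show ?thesis
    unfolding riskG_def risk_def using finite_measure_mono assms(3) by blast
qed

lemma (in finite_measure) measure_add_le_if_indicator_add_le:
  assumes "A \<in> sets M" "B \<in> sets M" "C \<in> sets M" "D \<in> sets M"
    and "\<And>x. x \<in> space M \<Longrightarrow> indicator A x + indicator B x \<le> (indicator C x + indicator D x :: real)"
  shows "measure M A + measure M B \<le> measure M C + measure M D"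
proof -
  have int: "integrable M (indicator E :: _ \<Rightarrow> real)" if "E \<in> sets M" for E
    using that by (simp add: integrable_indicator_iff less_top[symmetric])
  have "(\<integral>x. indicator A x + indicator B x \<partial>M) \<le> (\<integral>x. indicator C x + indicator D x \<partial>M :: real)"
    by (rule integral_mono) (use assms int in auto)
  then show ?thesis
    using assms int by (simp add: Bochner_Integration.integral_add emeasure_finite)
qed

text \<open>Pointwise, \<open>[f \<noteq> Y] + [f\<^sup>* \<noteq> Y'] \<le> [f \<noteq> Y'] + [f\<^sup>* \<noteq> Y]\<close>: off \<open>AGR(H)\<close> both sides agree, on it
  \<open>Y' = f\<^sup>*(X)\<close> and this is the triangle inequality for disagreement.\<close>
lemma riskG_le_riskG_if_risk_le:
  assumes "prob_space P" "fstar \<in> H"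
    and "{z \<in> space P. fstar (fst z) \<noteq> snd z} \<in> sets P"
    and "{z \<in> space P. f (fst z) \<noteq> snd z} \<in> sets P"
    and "{z \<in> space P. fstar (fst z) \<noteq> relab H (fst z) (snd z)} \<in> sets P"
    and "{z \<in> space P. f (fst z) \<noteq> relab H (fst z) (snd z)} \<in> sets P"
    and "risk P fstar \<le> risk P f"
  shows "riskG P H fstar \<le> riskG P H f"
proof -
  interpret prob_space P by fact
  have "risk P f + riskG P H fstar \<le> riskG P H f + risk P fstar"
    unfolding risk_def riskG_def
  proof (rule measure_add_le_if_indicator_add_le)
    fix w assume "w \<in> space P"
    then show "indicator {z \<in> space P. f (fst z) \<noteq> snd z} w
        + indicator {z \<in> space P. fstar (fst z) \<noteq> relab H (fst z) (snd z)} w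
      \<le> (indicator {z \<in> space P. f (fst z) \<noteq> relab H (fst z) (snd z)} w
        + indicator {z \<in> space P. fstar (fst z) \<noteq> snd z} w :: real)"
    proof (cases "fst w \<in> AGR H")
      case True
      then have "relab H (fst w) (snd w) = fstar (fst w)"
        using \<open>fstar \<in> H\<close> by (rule relab_eq_if_mem_AGR[rotated])
      then show ?thesis using \<open>w \<in> space P\<close> by (simp add: indicator_def)
    next
      case False
      then have "relab H (fst w) (snd w) = snd w" by (simp add: relab_def)
      then show ?thesis by (simp add: indicator_def)
    qed
  qed (use assms in blast)+
  then show ?thesis using assms(7) by linarith
qed

text \<open>The slack \<open>a\<close> may be negative (then \<open>sqrt\<close> is odd), so monotonicity of
  \<open>x \<mapsto> x + a + \<surd>(a x)\<close> needs the value at the smaller point to be nonnegative.\<close>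
lemma add_sqrt_mult_mono:
  fixes a x y :: real
  assumes "0 \<le> x" "x \<le> y" "0 \<le> x + a + sqrt (a * x)"
  shows "x + a + sqrt (a * x) \<le> y + a + sqrt (a * y)"
proof (cases "a \<ge> 0")
  case True
  then have "sqrt (a * x) \<le> sqrt (a * y)" using assms by (simp add: mult_left_mono)
  then show ?thesis using assms by linarith
next
  case False
  define u w q where "u = sqrt x" and "w = sqrt y" and "q = sqrt (- a)"
  have u: "u \<ge> 0" "u * u = x" and w: "w \<ge> 0" "w * w = y" and q: "q > 0" "q * q = - a"
    using assms False by (auto simp: u_def w_def q_def)
  have "u \<le> w" using assms by (simp add: u_def w_def)
  have sqrt_neg: "sqrt (a * v) = - (q * sqrt v)" if "0 \<le> v" for v
  proof -
    have "(q * sqrt v)\<^sup>2 = - a * v"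
      using that q(2) by (simp add: power_mult_distrib power2_eq_square[of q])
    then have "a * v = - (q * sqrt v)\<^sup>2" by simp
    then show ?thesis using q(1) that by (simp add: real_sqrt_minus)
  qed
  have sqrt_ax: "sqrt (a * x) = - (q * u)" and sqrt_ay: "sqrt (a * y) = - (q * w)"
    using sqrt_neg assms u_def w_def by auto
  have "0 \<le> u * u - q * q - q * u" using assms(3) sqrt_ax u q by simp
  have "q \<le> u"
  proof (rule ccontr)
    assume "\<not> q \<le> u"
    then have "u * u \<le> q * u" using u(1) by (intro mult_right_mono) auto
    then show False using \<open>0 \<le> u * u - q * q - q * u\<close> mult_pos_pos[OF q(1) q(1)] by linarith
  qed
  then have "0 \<le> (w - u) * (w + u - q)" using \<open>u \<le> w\<close> u by simp
  then show ?thesis using sqrt_ax sqrt_ay q u w by (simp add: algebra_simps)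
qed

text \<open>The arithmetic of one pruning step: \<open>r, \<rho>\<close> are the relabelled and empirical risks of the ERM,
  \<open>rs, es\<close> those of a minimizer of the relabelled risk.\<close>
lemma emp_risk_le_sigma_active:
  fixes r \<rho> rs es :: real
  assumes ERM: "r \<le> \<rho> + sigma_R_Rhat (real t / 2) (\<delta> / (2 * real t)) d r \<rho>"
    and minimizer: "es \<le> rs + sigma_Rhat_R (real t / 2) (\<delta> / (2 * real t)) d rs es"
    and "rs \<le> r" "0 \<le> rs" "0 \<le> es"
  shows "es \<le> \<rho> + sigma_active t \<delta> d \<rho>"
proof -
  define a where "a = slackA (real t / 2) (\<delta> / (2 * real t)) d / (real t / 2)"
  define r' where "r' = \<rho> + a + sqrt (a * \<rho>)"
  have "r \<le> r'"
    using ERM unfolding sigma_R_Rhat_def hat_sigma_R_Rhat_def r'_def a_def by linarith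
  have es_le: "es \<le> rs + a + sqrt (a * rs)"
    using minimizer unfolding sigma_Rhat_R_def bar_sigma_Rhat_R_def a_def by linarith
  also have "\<dots> \<le> r' + a + sqrt (a * r')"
  proof (rule add_sqrt_mult_mono)
    show "rs \<le> r'" using \<open>rs \<le> r\<close> \<open>r \<le> r'\<close> by (rule order_trans)
    show "0 \<le> rs + a + sqrt (a * rs)" using \<open>0 \<le> es\<close> es_le by (rule order_trans)
  qed fact
  also have "\<dots> = \<rho> + sigma_active t \<delta> d \<rho>"
    unfolding sigma_active_def hat_sigma_R_Rhat_def bar_sigma_Rhat_R_def r'_def a_def by simp
  finally show ?thesis .
qed

lemma active_iless_run_keeps_risk_minimizer:
  assumes P: "prob_space P"
    and meas: "\<forall>f\<in>F. {z \<in> space P. f (fst z) \<noteq> snd z} \<in> sets P"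
    and measG: "\<forall>H\<subseteq>F. \<forall>f\<in>F. {z \<in> space P. f (fst z) \<noteq> relab H (fst z) (snd z)} \<in> sets P"
    and run: "active_iless_run F d \<delta> z T G S fh"
    and K: "event_K P F d \<delta> T G S"
    and fstar: "fstar \<in> F" "\<forall>f\<in>F. risk P fstar \<le> risk P f"
    and "t \<le> T"
  shows "fstar \<in> G t \<and> G t \<subseteq> F"
  using \<open>t \<le> T\<close>
proof (induction t)
  case 0
  then show ?case using run fstar by (auto simp: active_iless_run_def)
next
  case (Suc n)
  let ?t = "Suc n"
  have IH: "fstar \<in> G n" "G n \<subseteq> F" using Suc by auto
  have ERM: "fh ?t \<in> F"
    and G_step: "G ?t = (if is_pow2 ?t
       then {f \<in> F. emp_risk f (S ?t) \<le> emp_risk (fh ?t) (S ?t) +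
                      sigma_active ?t \<delta> d (emp_risk (fh ?t) (S ?t))}
       else G n)"
    using run Suc.prems by (auto simp: active_iless_run_def)
  show ?case
  proof (cases "is_pow2 ?t")
    case True
    let ?n2 = "real ?t / 2" and ?\<delta>2 = "\<delta> / (2 * real ?t)"
    have t_reached: "1 \<le> ?t \<and> ?t \<le> T \<and> is_pow2 ?t" using Suc.prems True by simp
    have K_t: "riskG P (G n) f \<le> emp_risk f (S ?t) +
          sigma_R_Rhat ?n2 ?\<delta>2 d (riskG P (G n) f) (emp_risk f (S ?t)) \<and>
        emp_risk f (S ?t) \<le> riskG P (G n) f +
          sigma_Rhat_R ?n2 ?\<delta>2 d (riskG P (G n) f) (emp_risk f (S ?t))" if "f \<in> F" for f
      using K[unfolded event_K_def, rule_format, OF t_reached that] by simp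
    have "riskG P (G n) fstar \<le> riskG P (G n) (fh ?t)"
      using riskG_le_riskG_if_risk_le[OF P IH(1)] meas measG IH fstar ERM by auto
    moreover have "0 \<le> riskG P (G n) fstar" "0 \<le> emp_risk fstar (S ?t)"
      by (simp_all add: riskG_def emp_risk_def)
    ultimately have "emp_risk fstar (S ?t) \<le> emp_risk (fh ?t) (S ?t) +
                 sigma_active ?t \<delta> d (emp_risk (fh ?t) (S ?t))"
      using emp_risk_le_sigma_active[OF conjunct1[OF K_t[OF ERM]] conjunct2[OF K_t[OF fstar(1)]]]
      by blast
    then show ?thesis unfolding G_step if_P[OF True] using fstar(1) by blast
  qed (use G_step IH in simp)
qed

text \<open>The VC dimension and the range of \<open>\<delta>\<close> only enter the probability of \<open>\<K>\<close>.\<close>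
theorem lemma11:
  fixes F :: "('x \<Rightarrow> bool) set" and d :: nat and P :: "('x \<times> bool) measure"
    and \<delta> :: real and z :: "nat \<Rightarrow> 'x \<times> bool" and T :: nat
    and G :: "nat \<Rightarrow> ('x \<Rightarrow> bool) set" and S :: "nat \<Rightarrow> ('x \<times> bool) list"
    and fh :: "nat \<Rightarrow> ('x \<Rightarrow> bool)" and fstar :: "'x \<Rightarrow> bool"
  assumes vc: "has_vc_dim F d"
    and P: "prob_space P"
    and meas: "\<forall>f\<in>F. {z \<in> space P. f (fst z) \<noteq> snd z} \<in> sets P"
    and measG: "\<forall>H\<subseteq>F. \<forall>f\<in>F. {z \<in> space P. f (fst z) \<noteq> relab H (fst z) (snd z)} \<in> sets P"
    and \<delta>: "0 < \<delta>" "\<delta> < 1"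
    and run: "active_iless_run F d \<delta> z T G S fh"
    and K: "event_K P F d \<delta> T G S"
    and fstar: "fstar \<in> F" "\<forall>f\<in>F. risk P fstar \<le> risk P f"
  shows "\<forall>t\<le>T. fstar \<in> G t \<and> riskG P (G t) fstar \<le> risk P fstar"
proof (intro allI impI conjI)
  fix t assume "t \<le> T"
  then have "fstar \<in> G t"
    using active_iless_run_keeps_risk_minimizer[OF P meas measG run K fstar] by blast
  then show "fstar \<in> G t" "riskG P (G t) fstar \<le> risk P fstar"
    using riskG_le_risk[OF P] meas fstar(1) by auto
qed

end
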